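(* (Higher-dimensional analogue of Theorem 1 for knots in $S^{4n+1}$.) The set of functions $\{\sigma_\omega\}_{\omega\in S}$ is linearly independent as a set of real-valued functions on the set of all $(4n+1)$-Seifert matrices: if $\omega_1,\dots,\omega_N\in S$ are distinct and $\sum_i c_i\sigma_{\omega_i}(V)=0$ for all such $V$, with $c_i\in\mathbb{R}$, then all $c_i=0$.
   Context: A $(4n+1)$-Seifert matrix (Seifert matrix of a knot in $S^{4n+1}$) is a $2g\times2g$ integral matrix $V$ with $\det(V+V^T)=\pm1$. For a unit complex number $\omega$, its signature is $\sigma_\omega(V)=\mathrm{sign}\big[(\omega-\bar\omega)\big((1-\omega)V-(1-\bar\omega)V^T\big)\big]$, and its Alexander polynomial is $\Delta_V(t)=\det(tV+V^T)$. $S$ is the set of unit complex numbers with positive imaginary part. *)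

theory Defs
  imports "Jordan_Normal_Form.Matrix" "Jordan_Normal_Form.Char_Poly"
begin

definition mat_signature :: "complex mat \<Rightarrow> int" where
  "mat_signature A =
     int (\<Sum>x\<in>{x. poly (char_poly A) x = 0 \<and> Im x = 0 \<and> Re x > 0}. order x (char_poly A))
   - int (\<Sum>x\<in>{x. poly (char_poly A) x = 0 \<and> Im x = 0 \<and> Re x < 0}. order x (char_poly A))"

definition seifert_matrix :: "int mat \<Rightarrow> bool" where
  "seifert_matrix V \<longleftrightarrow>
     (\<exists>g. V \<in> carrier_mat (2*g) (2*g)) \<and>
     (det (V + transpose_mat V) = 1 \<or> det (V + transpose_mat V) = -1)"

definition tristram_sig :: "complex \<Rightarrow> int mat \<Rightarrow> int" where
  "tristram_sig \<omega> V =
     (let W = map_mat complex_of_int V in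
      mat_signature ((\<omega> - cnj \<omega>) \<cdot>\<^sub>m ((1 - \<omega>) \<cdot>\<^sub>m W - (1 - cnj \<omega>) \<cdot>\<^sub>m transpose_mat W)))"

definition alexander_poly :: "int mat \<Rightarrow> int poly" where
  "alexander_poly V = det ([:0, 1:] \<cdot>\<^sub>m map_mat (\<lambda>a. [:a:]) V + map_mat (\<lambda>a. [:a:]) (transpose_mat V))"

definition upper_unit_circle :: "complex set" where
  "upper_unit_circle = {\<omega>. cmod \<omega> = 1 \<and> Im \<omega> > 0}"

end

theory Submission
  imports Defs "Jordan_Normal_Form.Schur_Decomposition"
begin

(* For the integral 4x4 Seifert matrices V = seifert_family X t the Hermitian matrix H_w behind
   sigma_w(V) has zero diagonal, so its four real eigenvalues sum to zero: sigma_w(V) is nonzero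
   when det H_w < 0 (an odd number of negative eigenvalues) and vanishes when det H_w > 0 (two of
   each sign).  Up to the positive factor 64 (Im w)^4 y^2, det H_w is p(y) = 4(X^2+X+t)y^2 -
   (4X+8t)y + 1 at y = 1 - Re w, and X, t can be chosen with p(y0) < 0 and p > 0 on [y1, 2) for
   any 0 < y0 < y1 < 2.  Taking w_j with c_j nonzero of largest real part, this gives a Seifert
   matrix on which sigma_{w_j} is nonzero while sigma_{w_i} vanishes for all w_i of smaller real
   part, so the relation forces c_j = 0. *)

lemma order_prod_list_linear:
  "Polynomial.order x (\<Prod>a\<leftarrow>es. [:- a, 1:]) = count_list es (x::'a::idom)"
proof (induction es)
  case (Cons a es)
  have "(\<Prod>b\<leftarrow>a # es. [:- b, 1:]) \<noteq> 0"
    by (subst prod_list_zero_iff) auto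
  then have "Polynomial.order x (\<Prod>b\<leftarrow>a # es. [:- b, 1:])
      = Polynomial.order x [:- a, 1:] + Polynomial.order x (\<Prod>b\<leftarrow>es. [:- b, 1:])"
    unfolding list.map prod_list.Cons by (rule order_mult)
  then show ?case
    using Cons by (simp add: order_linear')
qed (simp add: order_0I)

lemma sum_order_real_roots:
  fixes rs :: "real list"
  defines "p \<equiv> \<Prod>a\<leftarrow>map complex_of_real rs. [:- a, 1:]"
  shows "(\<Sum>x\<in>{x. poly p x = 0 \<and> Im x = 0 \<and> P (Re x)}. Polynomial.order x p) = length (filter P rs)"
proof -
  have roots: "{x. poly p x = 0 \<and> Im x = 0 \<and> P (Re x)} = complex_of_real ` set (filter P rs)"
    unfolding p_def by (auto simp: poly_prod_list prod_list_zero_iff)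
  have "(\<Sum>x\<in>complex_of_real ` set (filter P rs). Polynomial.order x p) = (\<Sum>r\<in>set (filter P rs). count_list rs r)"
    unfolding p_def order_prod_list_linear
    by (subst sum.reindex) (auto simp: inj_on_def count_list_map_conv[OF inj_of_real])
  also have "\<dots> = (\<Sum>r\<in>set (filter P rs). count_list (filter P rs) r)"
    by (intro sum.cong) (auto simp: count_list_eq_length_filter filter_filter intro!: arg_cong[where f=length] filter_cong)
  also have "\<dots> = length (filter P rs)"
    by (simp add: sum_count_set)
  finally show ?thesis unfolding roots .
qed

lemma mat_signature_real_factorization:
  assumes "char_poly A = (\<Prod>a\<leftarrow>map complex_of_real rs. [:- a, 1:])"
  shows "mat_signature A = int (length (filter (\<lambda>r. r > 0) rs)) - int (length (filter (\<lambda>r. r < 0) rs))"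
  using sum_order_real_roots[where P = "\<lambda>r. r > 0"] sum_order_real_roots[where P = "\<lambda>r. r < 0"]
  unfolding mat_signature_def assms by simp

definition mat_trace :: "'a::comm_ring mat \<Rightarrow> 'a" where
  "mat_trace A = (\<Sum>i<dim_row A. A $$ (i,i))"

lemma mat_trace_mult_comm:
  assumes "A \<in> carrier_mat n m" and "B \<in> carrier_mat m n"
  shows "mat_trace (A * B) = mat_trace (B * A)"
proof -
  have "mat_trace (A * B) = (\<Sum>i<n. \<Sum>k<m. A $$ (i,k) * B $$ (k,i))"
    unfolding mat_trace_def using assms by (simp add: scalar_prod_def atLeast0LessThan)
  also have "\<dots> = (\<Sum>k<m. \<Sum>i<n. B $$ (k,i) * A $$ (i,k))"
    by (subst sum.swap) (simp add: mult.commute)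
  also have "\<dots> = mat_trace (B * A)"
    unfolding mat_trace_def using assms by (simp add: scalar_prod_def atLeast0LessThan)
  finally show ?thesis .
qed

lemma det_trace_char_poly_factorization:
  fixes A :: "'a::conjugatable_ordered_field mat"
  assumes A: "A \<in> carrier_mat n n" and cp: "char_poly A = (\<Prod>e\<leftarrow>es. [:- e, 1:])"
  shows "det A = prod_list es" and "mat_trace A = sum_list es"
proof -
  obtain B P Q where "schur_decomposition A es = (B, P, Q)"
    by (cases "schur_decomposition A es") auto
  with schur_decomposition[OF A cp] have sim: "similar_mat_wit A B P Q"
    and ut: "upper_triangular B" and diag: "diag_mat B = es"
    by auto
  from sim A have B: "B \<in> carrier_mat n n" and P: "P \<in> carrier_mat n n" and Q: "Q \<in> carrier_mat n n"
    and QP: "Q * P = 1\<^sub>m n" and APBQ: "A = P * B * Q"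
    unfolding similar_mat_wit_def Let_def by auto
  have "det A = det B"
    using sim by (intro det_similar) (auto simp: similar_mat_def)
  then show "det A = prod_list es"
    using det_upper_triangular[OF ut B] diag by simp
  have "mat_trace A = mat_trace (B * Q * P)"
    using APBQ P B Q mat_trace_mult_comm[of P n n "B * Q"] by (simp add: assoc_mult_mat[of P n n B n Q n])
  also have "\<dots> = mat_trace B"
    using B Q P QP by (simp add: assoc_mult_mat[of B n n Q n P n])
  also have "\<dots> = sum_list es"
    unfolding diag[symmetric] using B
    by (simp add: mat_trace_def diag_mat_def sum_set_upt_conv_sum_list_nat[symmetric] atLeast0LessThan)
  finally show "mat_trace A = sum_list es" .
qed

definition hermitian :: "complex mat \<Rightarrow> bool" where
  "hermitian H \<longleftrightarrow> transpose_mat H = map_mat cnj H"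

lemma hermitian_eigenvalue_real:
  fixes H :: "complex mat"
  assumes H: "H \<in> carrier_mat n n" and herm: "hermitian H" and ev: "eigenvector H v e"
  shows "Im e = 0"
proof -
  from ev H have v: "v \<in> carrier_vec n" and v0: "v \<noteq> 0\<^sub>v n" and Hv: "H *\<^sub>v v = e \<cdot>\<^sub>v v"
    unfolding eigenvector_def by auto
  have conj_Hv: "conjugate (H *\<^sub>v v) = H\<^sup>T *\<^sub>v conjugate v"
  proof (rule eq_vecI)
    fix i assume "i < dim_vec (H\<^sup>T *\<^sub>v conjugate v)"
    then have i: "i < n" using H by simp
    have "row H\<^sup>T i = conjugate (row H i)"
      using herm H i unfolding hermitian_def by (intro eq_vecI) auto
    moreover have "cnj (row H i \<bullet> v) = conjugate (row H i) \<bullet> conjugate v"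
      using conjugate_sprod_vec[of "row H i" n v] H v i by simp
    ultimately show "conjugate (H *\<^sub>v v) $ i = (H\<^sup>T *\<^sub>v conjugate v) $ i"
      using H i by simp
  qed (use H in simp)
  have "e * (v \<bullet>c v) = (H *\<^sub>v v) \<bullet> conjugate v"
    using Hv v by simp
  also have "\<dots> = v \<bullet> (H\<^sup>T *\<^sub>v conjugate v)"
    using transpose_vec_mult_scalar[of "H\<^sup>T" n n "conjugate v" v] H v by simp
  also have "\<dots> = v \<bullet> conjugate (e \<cdot>\<^sub>v v)"
    by (simp only: conj_Hv[symmetric] Hv)
  also have "\<dots> = cnj e * (v \<bullet>c v)"
    using v by (simp add: conjugate_smult_vec)
  finally have "e * (v \<bullet>c v) = cnj e * (v \<bullet>c v)" .
  moreover have "v \<bullet>c v \<noteq> 0"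
    using v v0 by simp
  ultimately have "cnj e = e" by simp
  then show "Im e = 0"
    by (simp add: complex_eq_iff)
qed

lemma hermitian_real_factorization:
  fixes H :: "complex mat"
  assumes H: "H \<in> carrier_mat n n" and herm: "hermitian H"
  obtains rs where "length rs = n" and "char_poly H = (\<Prod>a\<leftarrow>map complex_of_real rs. [:- a, 1:])"
    and "det H = complex_of_real (prod_list rs)" and "mat_trace H = complex_of_real (sum_list rs)"
proof -
  obtain es where cp: "char_poly H = (\<Prod>e\<leftarrow>es. [:- e, 1:])" and len: "length es = n"
    using char_poly_factorized[OF H] by blast
  have real: "Im e = 0" if "e \<in> set es" for e
  proof -
    have "poly (char_poly H) e = 0"
      unfolding cp using that by (auto simp: poly_prod_list prod_list_zero_iff)
    then obtain v where "eigenvector H v e"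
      using eigenvalue_root_char_poly[OF H] unfolding eigenvalue_def by blast
    then show ?thesis
      by (rule hermitian_eigenvalue_real[OF H herm])
  qed
  define rs where "rs = map Re es"
  have es: "es = map complex_of_real rs"
    unfolding rs_def using real by (simp add: map_idI complex_eq_iff)
  show thesis
  proof (rule that)
    show "length rs = n"
      using len by (simp add: rs_def)
    show "char_poly H = (\<Prod>a\<leftarrow>map complex_of_real rs. [:- a, 1:])"
      using cp by (simp only: es)
    show "det H = complex_of_real (prod_list rs)"
      using det_trace_char_poly_factorization(1)[OF H cp] by (simp only: es of_real_hom.hom_prod_list)
    show "mat_trace H = complex_of_real (sum_list rs)"
      using det_trace_char_poly_factorization(2)[OF H cp] by (simp only: es sum_list_of_real)
  qed
qed

lemma sign_counts_four_reals:
  fixes a b c d :: real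
  shows "a * b * c * d < 0 \<Longrightarrow>
      length (filter (\<lambda>r. r > 0) [a,b,c,d]) \<noteq> length (filter (\<lambda>r. r < 0) [a,b,c,d])"
    and "a * b * c * d > 0 \<Longrightarrow> a + b + c + d = 0 \<Longrightarrow>
      length (filter (\<lambda>r. r > 0) [a,b,c,d]) = length (filter (\<lambda>r. r < 0) [a,b,c,d])"
  by (auto simp: mult_less_0_iff zero_less_mult_iff)

lemma signature_traceless_hermitian_4:
  assumes H: "H \<in> carrier_mat 4 4" and herm: "hermitian H"
    and tr: "mat_trace H = 0" and det: "det H = complex_of_real d"
  shows "d < 0 \<Longrightarrow> mat_signature H \<noteq> 0" and "d > 0 \<Longrightarrow> mat_signature H = 0"
proof -
  obtain rs where len: "length rs = 4" and cp: "char_poly H = (\<Prod>a\<leftarrow>map complex_of_real rs. [:- a, 1:])"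
    and dH: "det H = complex_of_real (prod_list rs)" and tH: "mat_trace H = complex_of_real (sum_list rs)"
    using hermitian_real_factorization[OF H herm] .
  obtain a b c e where rs: "rs = [a, b, c, e]"
    using len by (auto simp: length_Suc_conv eval_nat_numeral)
  have "d = a * b * c * e" and "a + b + c + e = 0"
    using dH tH det tr unfolding rs by (simp_all add: mult.assoc flip: of_real_mult of_real_add)
  then show "d < 0 \<Longrightarrow> mat_signature H \<noteq> 0" and "d > 0 \<Longrightarrow> mat_signature H = 0"
    using sign_counts_four_reals[of a b c e]
    unfolding mat_signature_real_factorization[OF cp] rs by simp_all
qed

lemma det_2:
  assumes "A \<in> carrier_mat 2 2"
  shows "det A = A $$ (0,0) * A $$ (1,1) - A $$ (0,1) * A $$ (1,0)"
proof -
  have "det A = (\<Sum>j<2. A $$ (0,j) * cofactor A 0 j)"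
    by (rule laplace_expansion_row[OF assms]) simp
  also have "\<dots> = A $$ (0,0) * A $$ (1,1) - A $$ (0,1) * A $$ (1,0)"
    using assms by (simp add: numeral_2_eq_2 cofactor_def det_def mat_delete_def insert_index_def)
  finally show ?thesis .
qed

definition det3_formula :: "'a::comm_ring_1 \<Rightarrow> 'a \<Rightarrow> 'a \<Rightarrow> 'a \<Rightarrow> 'a \<Rightarrow> 'a \<Rightarrow> 'a \<Rightarrow> 'a \<Rightarrow> 'a \<Rightarrow> 'a" where
  "det3_formula a b c d e f g h i = a * (e * i - f * h) - b * (d * i - f * g) + c * (d * h - e * g)"

lemma det_3:
  assumes A: "A \<in> carrier_mat 3 3"
  shows "det A = det3_formula (A $$ (0,0)) (A $$ (0,1)) (A $$ (0,2))
    (A $$ (1,0)) (A $$ (1,1)) (A $$ (1,2)) (A $$ (2,0)) (A $$ (2,1)) (A $$ (2,2))"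
proof -
  have minors: "\<And>j. mat_delete A 0 j \<in> carrier_mat 2 2"
    using mat_delete_carrier[OF A] by simp
  show ?thesis
    apply (subst laplace_expansion_row[OF A, of 0], simp)
    apply (simp add: cofactor_def det_2[OF minors])
    using A apply (simp add: eval_nat_numeral mat_delete_def insert_index_def det3_formula_def)
    apply (simp add: algebra_simps)
    done
qed

lemma det_4:
  assumes A: "A \<in> carrier_mat 4 4"
  shows "det A =
      A $$ (0,0) * det3_formula (A $$ (1,1)) (A $$ (1,2)) (A $$ (1,3)) (A $$ (2,1)) (A $$ (2,2)) (A $$ (2,3)) (A $$ (3,1)) (A $$ (3,2)) (A $$ (3,3))
    - A $$ (0,1) * det3_formula (A $$ (1,0)) (A $$ (1,2)) (A $$ (1,3)) (A $$ (2,0)) (A $$ (2,2)) (A $$ (2,3)) (A $$ (3,0)) (A $$ (3,2)) (A $$ (3,3))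
    + A $$ (0,2) * det3_formula (A $$ (1,0)) (A $$ (1,1)) (A $$ (1,3)) (A $$ (2,0)) (A $$ (2,1)) (A $$ (2,3)) (A $$ (3,0)) (A $$ (3,1)) (A $$ (3,3))
    - A $$ (0,3) * det3_formula (A $$ (1,0)) (A $$ (1,1)) (A $$ (1,2)) (A $$ (2,0)) (A $$ (2,1)) (A $$ (2,2)) (A $$ (3,0)) (A $$ (3,1)) (A $$ (3,2))"
proof -
  have minors: "\<And>j. mat_delete A 0 j \<in> carrier_mat 3 3"
    using mat_delete_carrier[OF A] by simp
  show ?thesis
    apply (subst laplace_expansion_row[OF A, of 0], simp)
    apply (simp add: cofactor_def det_3[OF minors])
    using A apply (simp add: eval_nat_numeral mat_delete_def insert_index_def)
    done
qed

definition seifert_family :: "int \<Rightarrow> int \<Rightarrow> int mat" where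
  "seifert_family X t = mat 4 4 (\<lambda>(i,j).
     [[0, 0, 1, 1], [1, 0, X + t, t], [-1, -(X + t), 0, 0], [-1, -t, 1, 0]] ! i ! j)"

lemma seifert_family_carrier: "seifert_family X t \<in> carrier_mat 4 4"
  unfolding seifert_family_def by simp

lemma seifert_family_index:
  "i < 4 \<Longrightarrow> j < 4 \<Longrightarrow> seifert_family X t $$ (i,j) =
     [[0, 0, 1, 1], [1, 0, X + t, t], [-1, -(X + t), 0, 0], [-1, -t, 1, 0]] ! i ! j"
  unfolding seifert_family_def by simp

lemma seifert_matrix_seifert_family: "seifert_matrix (seifert_family X t)"
proof -
  have "det (seifert_family X t + transpose_mat (seifert_family X t)) = 1"
    by (subst det_4) (auto simp: seifert_family_def det3_formula_def eval_nat_numeral)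
  moreover have "seifert_family X t \<in> carrier_mat (2 * 2) (2 * 2)"
    using seifert_family_carrier by simp
  ultimately show ?thesis
    unfolding seifert_matrix_def by blast
qed

definition tristram_form :: "complex \<Rightarrow> int mat \<Rightarrow> complex mat" where
  "tristram_form w V = (let W = map_mat complex_of_int V in
     (w - cnj w) \<cdot>\<^sub>m ((1 - w) \<cdot>\<^sub>m W - (1 - cnj w) \<cdot>\<^sub>m transpose_mat W))"

lemma tristram_sig_eq_signature: "tristram_sig w V = mat_signature (tristram_form w V)"
  unfolding tristram_sig_def tristram_form_def by (simp add: Let_def)

lemma tristram_form_carrier: "V \<in> carrier_mat n n \<Longrightarrow> tristram_form w V \<in> carrier_mat n n"
  unfolding tristram_form_def Let_def by auto

lemma tristram_form_index:
  "V \<in> carrier_mat n n \<Longrightarrow> i < n \<Longrightarrow> j < n \<Longrightarrow> tristram_form w V $$ (i,j)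
     = (w - cnj w) * ((1 - w) * of_int (V $$ (i,j)) - (1 - cnj w) * of_int (V $$ (j,i)))"
  unfolding tristram_form_def Let_def by auto

lemma hermitian_tristram_form:
  assumes "V \<in> carrier_mat n n"
  shows "hermitian (tristram_form w V)"
proof -
  have "tristram_form w V \<in> carrier_mat n n"
    using assms by (rule tristram_form_carrier)
  then show ?thesis
    unfolding hermitian_def by (intro eq_matI) (auto simp: tristram_form_index[OF assms] algebra_simps)
qed

definition family_det_poly :: "real \<Rightarrow> real \<Rightarrow> real \<Rightarrow> real" where
  "family_det_poly X t y = 4 * (X\<^sup>2 + X + t) * y\<^sup>2 - (4 * X + 8 * t) * y + 1"

lemma det_seifert_family_pencil:
  fixes X t :: int and a b :: "'a::comm_ring_1"
  defines "W \<equiv> map_mat of_int (seifert_family X t)"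
  shows "det (a \<cdot>\<^sub>m W - b \<cdot>\<^sub>m W\<^sup>T) = (a * b)\<^sup>2 + ((of_int X)\<^sup>2 + of_int X) * (a + b)^4
    - 2 * of_int X * a * b * (a + b)\<^sup>2 + of_int t * (a - b)\<^sup>2 * (a + b)\<^sup>2"
proof -
  have C: "a \<cdot>\<^sub>m W - b \<cdot>\<^sub>m W\<^sup>T \<in> carrier_mat 4 4"
    unfolding W_def seifert_family_def by auto
  show ?thesis
    unfolding det_4[OF C] unfolding W_def
    by (simp add: seifert_family_def det3_formula_def) (simp add: algebra_simps power2_eq_square power4_eq_xxxx)
qed

lemma det_tristram_form_seifert_family:
  assumes "cmod w = 1"
  shows "det (tristram_form w (seifert_family X t))
    = complex_of_real (64 * (Im w)^4 * (1 - Re w)\<^sup>2 * family_det_poly (of_int X) (of_int t) (1 - Re w))"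
proof -
  define y where "y = 1 - Re w"
  have circle: "(Re w)\<^sup>2 + (Im w)\<^sup>2 = 1"
    using assms unfolding cmod_def by simp
  have "(1 - w) * (1 - cnj w) = complex_of_real (2 * y)"
    using circle by (simp add: complex_eq_iff y_def power2_eq_square algebra_simps)
  moreover have "(1 - w) + (1 - cnj w) = complex_of_real (2 * y)"
    by (simp add: complex_eq_iff y_def)
  moreover have "((1 - w) - (1 - cnj w))\<^sup>2 = complex_of_real (- 4 * y * (2 - y))"
    using circle by (simp add: complex_eq_iff y_def power2_eq_square algebra_simps)
  moreover have "(w - cnj w)^4 = complex_of_real (16 * (Im w)^4)"
    by (simp add: complex_diff_cnj power_mult_distrib)
  ultimately have "det (tristram_form w (seifert_family X t)) = complex_of_real (16 * (Im w)^4 *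
      ((2 * y)\<^sup>2 + ((of_int X)\<^sup>2 + of_int X) * (2 * y)^4 - 2 * of_int X * (2 * y) * (2 * y)\<^sup>2
       + of_int t * (- 4 * y * (2 - y)) * (2 * y)\<^sup>2))"
    using det_seifert_family_pencil[of "1 - w" X t "1 - cnj w"] seifert_family_carrier[of X t]
    unfolding tristram_form_def Let_def by simp
  then show ?thesis
    unfolding y_def family_det_poly_def by (simp add: algebra_simps power2_eq_square power4_eq_xxxx)
qed

lemma mat_trace_tristram_form_seifert_family: "mat_trace (tristram_form w (seifert_family X t)) = 0"
proof -
  have "seifert_family X t $$ (i,i) = 0" if "i < 4" for i
    using that by (auto simp: seifert_family_index eval_nat_numeral less_Suc_eq)
  moreover have "dim_row (tristram_form w (seifert_family X t)) = 4"
    using tristram_form_carrier[OF seifert_family_carrier] by blast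
  ultimately show ?thesis
    by (simp add: mat_trace_def tristram_form_index[OF seifert_family_carrier])
qed

lemma upper_unit_circleD:
  assumes "w \<in> upper_unit_circle"
  shows "Im w > 0" and "cmod w = 1" and "-1 < Re w" and "Re w < 1"
proof -
  show "Im w > 0" and "cmod w = 1"
    using assms unfolding upper_unit_circle_def by auto
  then have "(Re w)\<^sup>2 + (Im w)\<^sup>2 = 1" and "(Im w)\<^sup>2 > 0"
    unfolding cmod_def by simp_all
  then have "(Re w)\<^sup>2 < 1"
    by linarith
  then show "-1 < Re w" and "Re w < 1"
    by (simp_all add: abs_square_less_1 abs_less_iff)
qed

lemma tristram_sig_seifert_family:
  assumes w: "w \<in> upper_unit_circle"
  shows "family_det_poly (of_int X) (of_int t) (1 - Re w) < 0 \<Longrightarrow> tristram_sig w (seifert_family X t) \<noteq> 0"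
    and "family_det_poly (of_int X) (of_int t) (1 - Re w) > 0 \<Longrightarrow> tristram_sig w (seifert_family X t) = 0"
proof -
  let ?g = "family_det_poly (of_int X) (of_int t) (1 - Re w)"
  have "64 * (Im w)^4 * (1 - Re w)\<^sup>2 > 0"
    using upper_unit_circleD[OF w] by simp
  then have "?g < 0 \<Longrightarrow> 64 * (Im w)^4 * (1 - Re w)\<^sup>2 * ?g < 0"
    and "?g > 0 \<Longrightarrow> 64 * (Im w)^4 * (1 - Re w)\<^sup>2 * ?g > 0"
    by (simp_all add: mult_pos_neg)
  with signature_traceless_hermitian_4[OF tristram_form_carrier[OF seifert_family_carrier]
      hermitian_tristram_form[OF seifert_family_carrier] mat_trace_tristram_form_seifert_family
      det_tristram_form_seifert_family[OF upper_unit_circleD(2)[OF w]]]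
  show "?g < 0 \<Longrightarrow> tristram_sig w (seifert_family X t) \<noteq> 0"
    and "?g > 0 \<Longrightarrow> tristram_sig w (seifert_family X t) = 0"
    unfolding tristram_sig_eq_signature by blast+
qed

definition family_det_linear :: "real \<Rightarrow> real \<Rightarrow> real \<Rightarrow> real" where
  "family_det_linear X t y = (X\<^sup>2 + X + t) * y - X - 2 * t"

lemma family_det_poly_eq: "family_det_poly X t y = 4 * y * family_det_linear X t y + 1"
  unfolding family_det_poly_def family_det_linear_def by (simp add: algebra_simps power2_eq_square)

lemma family_det_linear_mono:
  assumes "0 \<le> X\<^sup>2 + X + t" and "y \<le> y'"
  shows "family_det_linear X t y \<le> family_det_linear X t y'"
  using assms unfolding family_det_linear_def by (simp add: mult_left_mono)

lemma exists_family_det_linear_sign_change: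
  fixes y0 y1 c :: real
  assumes y0: "0 < y0" and "y0 < y1" and "y1 < 2" and c: "0 \<le> c"
  shows "\<exists>X t :: int. 0 \<le> (real_of_int X)\<^sup>2 + of_int X + of_int t \<and>
    family_det_linear (of_int X) (of_int t) y0 < - c \<and> 0 \<le> family_det_linear (of_int X) (of_int t) y1"
proof -
  define p q \<delta> where "p = 2 - y0" and "q = 2 - y1" and "\<delta> = y1 / q - y0 / p"
  have p: "p > 0" and q: "q > 0"
    using assms by (auto simp: p_def q_def)
  have "y0 * q < y1 * p"
    using assms by (simp add: p_def q_def algebra_simps)
  then have \<delta>: "\<delta> > 0"
    using p q by (simp add: \<delta>_def field_simps)
  obtain n :: nat where n: "1 + c / p + 1 / q < real n * \<delta>"
    using ex_less_of_nat_mult[OF \<delta>] by blast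
  define X :: nat where "X = Suc n"
  define K where "K = (real X)\<^sup>2 + real X"
  have "(real X - 1) * (1 + c / p) \<ge> 0"
    using c p by (simp add: X_def)
  then have "1 + c / p + real X / q \<le> real X * (1 + c / p + 1 / q)"
    by (simp add: algebra_simps)
  also have "\<dots> \<le> real X * (real X * \<delta>)"
    using n \<delta> by (intro mult_left_mono) (simp_all add: X_def algebra_simps)
  also have "\<dots> \<le> K * \<delta>"
    using \<delta> by (simp add: K_def power2_eq_square algebra_simps)
  finally have K\<delta>: "1 + c / p + real X / q \<le> K * \<delta>" .
  \<comment> \<open>As family_det_linear X t y = K y - t (2 - y) - X, any integer t in the interval
    ((K y0 + c) / p, (K y1 - X) / q] works, and by the choice of X this interval has length at least 1.\<close>
  define t :: int where "t = \<lfloor>(K * y0 + c) / p\<rfloor> + 1"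
  have t_lower: "(K * y0 + c) / p < t"
    unfolding t_def by linarith
  have "(K * y0 + c) / p + 1 \<le> (K * y1 - X) / q"
    using K\<delta> unfolding \<delta>_def diff_divide_distrib add_divide_distrib right_diff_distrib times_divide_eq_right
    by linarith
  then have "t \<le> (K * y1 - X) / q"
    unfolding t_def by linarith
  then have t_upper: "t * q \<le> K * y1 - X"
    using q by (simp add: field_simps)
  have linear: "family_det_linear (of_int (int X)) (of_int t) y = K * y - of_int t * (2 - y) - X" for y
    by (simp add: family_det_linear_def K_def algebra_simps)
  show ?thesis
  proof (intro exI conjI)
    have "0 \<le> (K * y0 + c) / p"
      using y0 c p by (simp add: K_def)
    then show "0 \<le> (real_of_int (int X))\<^sup>2 + of_int (int X) + of_int t"
      using t_lower by (simp add: K_def)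
    have "t * p > K * y0 + c"
      using t_lower p by (simp add: field_simps)
    then show "family_det_linear (of_int (int X)) (of_int t) y0 < - c"
      using linear[of y0] unfolding p_def by linarith
    show "0 \<le> family_det_linear (of_int (int X)) (of_int t) y1"
      using linear[of y1] t_upper unfolding q_def by linarith
  qed
qed

lemma exists_family_det_poly_sign_change:
  fixes y0 y1 :: real
  assumes y0: "0 < y0" and y01: "y0 < y1" and "y1 < 2"
  shows "\<exists>X t :: int. family_det_poly (of_int X) (of_int t) y0 < 0 \<and>
    (\<forall>y. y1 \<le> y \<longrightarrow> family_det_poly (of_int X) (of_int t) y > 0)"
proof -
  obtain X t :: int where mono: "0 \<le> (real_of_int X)\<^sup>2 + of_int X + of_int t"
    and neg: "family_det_linear (of_int X) (of_int t) y0 < - (1 / (4 * y0))"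
    and nonneg: "0 \<le> family_det_linear (of_int X) (of_int t) y1"
    using exists_family_det_linear_sign_change[OF assms, of "1 / (4 * y0)"] y0 by auto
  have "4 * y0 * family_det_linear (of_int X) (of_int t) y0 < 4 * y0 * - (1 / (4 * y0))"
    using neg y0 by (intro mult_strict_left_mono) simp_all
  then have "family_det_poly (of_int X) (of_int t) y0 < 0"
    using y0 by (simp add: family_det_poly_eq)
  moreover have "family_det_poly (of_int X) (of_int t) y > 0" if "y1 \<le> y" for y
  proof -
    have "0 \<le> family_det_linear (of_int X) (of_int t) y"
      using nonneg family_det_linear_mono[OF mono that] by linarith
    then have "0 \<le> 4 * y * family_det_linear (of_int X) (of_int t) y"
      using that y0 y01 by simp
    then show ?thesis
      by (simp add: family_det_poly_eq)
  qed
  ultimately show ?thesis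
    by blast
qed

lemma inj_on_Re_upper_unit_circle: "inj_on Re upper_unit_circle"
proof (rule inj_onI)
  fix w u
  assume w: "w \<in> upper_unit_circle" and u: "u \<in> upper_unit_circle" and Re: "Re w = Re u"
  have "(Re w)\<^sup>2 + (Im w)\<^sup>2 = 1" and "(Re u)\<^sup>2 + (Im u)\<^sup>2 = 1"
    using upper_unit_circleD(2)[OF w] upper_unit_circleD(2)[OF u] unfolding cmod_def by simp_all
  then have "(Im w)\<^sup>2 = (Im u)\<^sup>2"
    using Re by simp
  then have "Im w = Im u"
    using upper_unit_circleD(1)[OF w] upper_unit_circleD(1)[OF u] by (simp add: power2_eq_iff_nonneg)
  then show "w = u"
    using Re by (simp add: complex_eq_iff)
qed

lemma exists_seifert_matrix_separating:
  assumes w: "w \<in> upper_unit_circle" and a: "-1 \<le> a" "a < Re w"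
  shows "\<exists>V. seifert_matrix V \<and> tristram_sig w V \<noteq> 0 \<and>
    (\<forall>u\<in>upper_unit_circle. Re u \<le> a \<longrightarrow> tristram_sig u V = 0)"
proof -
  define y0 y1 where "y0 = 1 - Re w" and "y1 = (y0 + (1 - a)) / 2"
  have "0 < y0" and "y0 < y1" and "y1 < 2"
    using upper_unit_circleD(3,4)[OF w] a by (simp_all add: y0_def y1_def)
  then obtain X t where neg: "family_det_poly (of_int X) (of_int t) y0 < 0"
    and pos: "\<And>y. y1 \<le> y \<Longrightarrow> family_det_poly (of_int X) (of_int t) y > 0"
    using exists_family_det_poly_sign_change by blast
  have "tristram_sig w (seifert_family X t) \<noteq> 0"
    using tristram_sig_seifert_family(1)[OF w] neg by (simp add: y0_def)
  moreover have "tristram_sig u (seifert_family X t) = 0" if "u \<in> upper_unit_circle" "Re u \<le> a" for u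
    using tristram_sig_seifert_family(2)[OF that(1)] pos that(2) a by (simp add: y0_def y1_def)
  ultimately show ?thesis
    using seifert_matrix_seifert_family by blast
qed

lemma exists_seifert_matrix_isolating:
  fixes \<omega> :: "'i \<Rightarrow> complex"
  assumes I: "finite I" and circle: "\<omega> ` I \<subseteq> upper_unit_circle" and j: "j \<in> I"
  shows "\<exists>V. seifert_matrix V \<and> tristram_sig (\<omega> j) V \<noteq> 0 \<and>
    (\<forall>i\<in>I. Re (\<omega> i) < Re (\<omega> j) \<longrightarrow> tristram_sig (\<omega> i) V = 0)"
proof -
  define a where "a = Max (insert (-1) {Re (\<omega> i) | i. i \<in> I \<and> Re (\<omega> i) < Re (\<omega> j)})"
  have fin: "finite {Re (\<omega> i) | i. i \<in> I \<and> Re (\<omega> i) < Re (\<omega> j)}"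
    using I by simp
  have a_lower: "-1 \<le> a"
    using fin by (simp add: a_def)
  have below: "Re (\<omega> i) \<le> a" if "i \<in> I" and "Re (\<omega> i) < Re (\<omega> j)" for i
    unfolding a_def using fin that by (intro Max_ge) auto
  have wj: "\<omega> j \<in> upper_unit_circle"
    using circle j by blast
  have a_upper: "a < Re (\<omega> j)"
    using fin upper_unit_circleD(3)[OF wj] by (auto simp: a_def)
  obtain V where "seifert_matrix V" and "tristram_sig (\<omega> j) V \<noteq> 0"
    and "\<forall>u\<in>upper_unit_circle. Re u \<le> a \<longrightarrow> tristram_sig u V = 0"
    using exists_seifert_matrix_separating[OF wj a_lower a_upper] by blast
  with circle below show ?thesis
    by blast
qed

lemma triangular_family_coeffs_zero:
  fixes f :: "'i \<Rightarrow> 'x \<Rightarrow> 'a::semiring_no_zero_divisors" and key :: "'i \<Rightarrow> 'k::linorder"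
  assumes I: "finite I" and inj: "inj_on key I"
    and isolating: "\<And>j. j \<in> I \<Longrightarrow> \<exists>x\<in>D. f j x \<noteq> 0 \<and> (\<forall>i\<in>I. key i < key j \<longrightarrow> f i x = 0)"
    and vanishing: "\<And>x. x \<in> D \<Longrightarrow> (\<Sum>i\<in>I. c i * f i x) = 0"
  shows "\<forall>i\<in>I. c i = 0"
proof (rule ccontr)
  define J where "J = {i \<in> I. c i \<noteq> 0}"
  assume "\<not> (\<forall>i\<in>I. c i = 0)"
  then have "J \<noteq> {}" and "finite J"
    using I by (auto simp: J_def)
  then have "Max (key ` J) \<in> key ` J"
    by simp
  then obtain j where j: "j \<in> J" and "key j = Max (key ` J)"
    by auto
  then have jmax: "\<And>i. i \<in> J \<Longrightarrow> key i \<le> key j"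
    using \<open>finite J\<close> by simp
  from j have "j \<in> I"
    by (simp add: J_def)
  then obtain x where x: "x \<in> D" "f j x \<noteq> 0" and kills: "\<forall>i\<in>I. key i < key j \<longrightarrow> f i x = 0"
    using isolating by blast
  have others: "c i * f i x = 0" if i: "i \<in> I - {j}" for i
  proof (cases "i \<in> J")
    case True
    with jmax have "key i \<le> key j" by blast
    moreover have "key i \<noteq> key j"
      using inj i j by (auto simp: J_def inj_on_def)
    ultimately show ?thesis
      using kills i by simp
  qed (use i in \<open>simp add: J_def\<close>)
  have "(\<Sum>i\<in>I. c i * f i x) = c j * f j x + (\<Sum>i\<in>I - {j}. c i * f i x)"
    using I \<open>j \<in> I\<close> by (rule sum.remove)
  also have "(\<Sum>i\<in>I - {j}. c i * f i x) = 0"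
    using others by (intro sum.neutral) blast
  finally have "c j * f j x = 0"
    using vanishing[OF \<open>x \<in> D\<close>] by simp
  with x j show False
    by (simp add: J_def)
qed

theorem mainTheorem9:
  fixes N :: nat and \<omega> :: "nat \<Rightarrow> complex" and c :: "nat \<Rightarrow> real"
  assumes "\<forall>i<N. \<omega> i \<in> upper_unit_circle"
    and "inj_on \<omega> {..<N}"
    and "\<forall>V. seifert_matrix V \<longrightarrow> (\<Sum>i<N. c i * real_of_int (tristram_sig (\<omega> i) V)) = 0"
  shows "\<forall>i<N. c i = 0"
proof -
  have circle: "\<omega> ` {..<N} \<subseteq> upper_unit_circle"
    using assms(1) by blast
  have inj: "inj_on (Re \<circ> \<omega>) {..<N}"
    using assms(2) inj_on_subset[OF inj_on_Re_upper_unit_circle circle] by (rule comp_inj_on)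
  have "\<forall>i\<in>{..<N}. c i = 0"
  proof (rule triangular_family_coeffs_zero[where f = "\<lambda>i V. real_of_int (tristram_sig (\<omega> i) V)"
        and D = "Collect seifert_matrix", OF finite_lessThan inj])
    fix j assume "j \<in> {..<N}"
    then show "\<exists>V\<in>Collect seifert_matrix. real_of_int (tristram_sig (\<omega> j) V) \<noteq> 0 \<and>
        (\<forall>i\<in>{..<N}. (Re \<circ> \<omega>) i < (Re \<circ> \<omega>) j \<longrightarrow> real_of_int (tristram_sig (\<omega> i) V) = 0)"
      using exists_seifert_matrix_isolating[OF finite_lessThan circle] by auto
  next
    fix V assume "V \<in> Collect seifert_matrix"
    then show "(\<Sum>i\<in>{..<N}. c i * real_of_int (tristram_sig (\<omega> i) V)) = 0"
      using assms(3) by simp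
  qed
  then show ?thesis
    by simp
qed

end
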